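(* Let $\{(x_n,y_n)\}_{n=1}^k\subset(\mathbb Q\cap(0,1))\times(\mathbb Q\cap(0,1))$ with $x_m\ne x_n$ for $m\ne n$ and $y_m\ge y_n$ whenever $x_m\ge x_n$. Then there exists a binary digit vector $\vec B$ such that $F_{\vec B}(x_n)=y_n$ for all $n=1,\dots,k$.
   Context: A binary digit vector of length (scale factor) $N\ge3$ is $\vec B=(b_0,\dots,b_{N-1})\in\{0,1\}^N$ with $2\le\|\vec B\|:=\sum_i b_i\le N-1$; its digit set is $D=\{i:b_i=1\}$. With $\phi_d(x)=(x+d)/N$ for $d\in D$, let $\mu_{\vec B}$ be the unique Borel probability measure with $\mu_{\vec B}=\frac{1}{\|\vec B\|}\sum_{d\in D}\mu_{\vec B}\circ\phi_d^{-1}$, supported on the attractor $C_{\vec B}\subset[0,1]$. The CDF is $F_{\vec B}(x)=\mu_{\vec B}([0,x])$, $x\in[0,1]$. The scale factor $N$ of $\vec B$ is not prescribed. *)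

theory Defs
  imports "HOL-Probability.Probability"
begin

definition digit_set :: "nat list \<Rightarrow> nat set" where
  "digit_set B = {i. i < length B \<and> B ! i = 1}"

definition bnorm :: "nat list \<Rightarrow> nat" where
  "bnorm B = sum_list B"

definition binary_digit_vector :: "nat list \<Rightarrow> bool" where
  "binary_digit_vector B \<longleftrightarrow>
     length B \<ge> 3 \<and> set B \<subseteq> {0, 1} \<and> 2 \<le> bnorm B \<and> bnorm B \<le> length B - 1"

definition phi :: "nat list \<Rightarrow> nat \<Rightarrow> real \<Rightarrow> real" where
  "phi B d x = (x + real d) / real (length B)"

definition self_similar :: "nat list \<Rightarrow> real measure \<Rightarrow> bool" where
  "self_similar B \<mu> \<longleftrightarrow>
     sets \<mu> = sets borel \<and> prob_space \<mu> \<and>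
     (\<forall>A \<in> sets borel.
        emeasure \<mu> A = (\<Sum>d\<in>digit_set B. emeasure \<mu> (phi B d -` A)) / ennreal (real (bnorm B)))"

definition mu_B :: "nat list \<Rightarrow> real measure" where
  "mu_B B = (THE \<mu>. self_similar B \<mu>)"

definition cdf_B :: "nat list \<Rightarrow> real \<Rightarrow> real" where
  "cdf_B B x = measure (mu_B B) {0..x}"

end

theory Submission
  imports Defs
begin

(*
  On distribution functions the self-similarity equation reads F = T F with
  (T F)(x) = (1/|D|) * sum over d in D of F(N x - d). For functions vanishing off [0,1)
  at most one term of this sum is nonzero, so T contracts differences of distribution
  functions supported in [0,1] by the factor 1/|D| <= 1/2; iterating T gives existence and
  uniqueness of mu_B. If a = floor(N x) is not a digit, every term F(N x - d) is 0 or 1,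
  hence F_B(x) = #{d in D. d < a} / |D|. So, writing y_n = c_n / M with a common
  denominator M, it suffices to take N so large that the integers floor(N x_n) are more
  than M apart and more than M away from 0 and N, and to place M digits, none at any
  floor(N x_n), exactly c_n of them below floor(N x_n).
*)

section \<open>The Hutchinson operator on distribution functions\<close>

definition hutchinson :: "nat \<Rightarrow> nat set \<Rightarrow> (real \<Rightarrow> real) \<Rightarrow> real \<Rightarrow> real" where
  "hutchinson N D F x = (\<Sum>d\<in>D. F (real N * x - real d)) / real (card D)"

lemma abs_hutchinson_diff_le:
  assumes agree: "\<And>y. y < 0 \<or> 1 \<le> y \<Longrightarrow> F y = G y" and bound: "\<And>y. \<bar>F y - G y\<bar> \<le> c"
  shows "\<bar>hutchinson N D F x - hutchinson N D G x\<bar> \<le> c / real (card D)"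
proof (cases "finite D")
  case True
  let ?h = "\<lambda>d. F (real N * x - real d) - G (real N * x - real d)"
  let ?S = "D - {d. ?h d = 0}"
  have "?S \<subseteq> {nat \<lfloor>real N * x\<rfloor>}"
  proof
    fix d assume "d \<in> ?S"
    then have "real d \<le> real N * x" "real N * x < real d + 1"
      using agree[of "real N * x - real d"] by force+
    then have "\<lfloor>real N * x\<rfloor> = int d"
      by (intro floor_unique) simp_all
    then show "d \<in> {nat \<lfloor>real N * x\<rfloor>}"
      by simp
  qed
  then have "card ?S \<le> 1"
    using card_mono[of "{nat \<lfloor>real N * x\<rfloor>}" ?S] by simp
  have "\<bar>\<Sum>d\<in>D. ?h d\<bar> = \<bar>\<Sum>d\<in>?S. ?h d\<bar>"
    by (simp only: sum.setdiff_irrelevant[OF True])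
  also have "\<dots> \<le> (\<Sum>d\<in>?S. \<bar>?h d\<bar>)"
    by (rule sum_abs)
  also have "\<dots> \<le> real (card ?S) * c"
    using bound by (intro sum_bounded_above)
  also have "\<dots> \<le> c"
    using \<open>card ?S \<le> 1\<close> bound[of 0] by (simp add: mult_left_le_one_le)
  finally show ?thesis
    unfolding hutchinson_def by (simp add: divide_right_mono sum_subtractf flip: diff_divide_distrib)
qed (use bound[of 0] in \<open>simp add: hutchinson_def\<close>)

lemma hutchinson_at_gap:
  assumes F0: "\<And>y. y < 0 \<Longrightarrow> F y = 0" and F1: "\<And>y. 1 \<le> y \<Longrightarrow> F y = 1"
    and a: "real a \<le> real N * x" "real N * x < real a + 1" "a \<notin> D"
  shows "hutchinson N D F x = real (card {d\<in>D. d < a}) / real (card D)"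
proof (cases "finite D")
  case True
  have "F (real N * x - real d) = (if d < a then 1 else 0)" if "d \<in> D" for d
  proof (cases "d < a")
    case True
    then show ?thesis using F1 a(1) by simp
  next
    case False
    with that a(3) have "a < d" by (metis linorder_neqE_nat)
    then show ?thesis using F0 a(2) by simp
  qed
  then show ?thesis
    unfolding hutchinson_def by (simp add: sum.If_cases True Int_def)
qed (simp add: hutchinson_def)

definition unit_cdf :: "(real \<Rightarrow> real) \<Rightarrow> bool" where
  "unit_cdf F \<longleftrightarrow> mono F \<and> (\<forall>y\<le>0. F y = 0) \<and> (\<forall>y\<ge>1. F y = 1) \<and> continuous_on UNIV F"

lemma unit_cdf_bounds:
  assumes "unit_cdf F"
  shows "0 \<le> F x" "F x \<le> 1"
proof -
  have "mono F" "F (min x 0) = 0" "F (max x 1) = 1"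
    using assms by (simp_all add: unit_cdf_def)
  then show "0 \<le> F x" "F x \<le> 1"
    by (metis min.cobounded1 monoD, metis max.cobounded1 monoD)
qed

lemma unit_cdf_hutchinson:
  assumes D: "finite D" "D \<noteq> {}" "D \<subseteq> {..<N}" and F: "unit_cdf F"
  shows "unit_cdf (hutchinson N D F)"
proof -
  have mono: "mono F" and F0: "\<And>y. y \<le> 0 \<Longrightarrow> F y = 0" and F1: "\<And>y. 1 \<le> y \<Longrightarrow> F y = 1"
    and cont: "continuous_on UNIV F"
    using F by (auto simp: unit_cdf_def)
  have card: "0 < card D"
    using D by (simp add: card_gt_0_iff)
  have "mono (hutchinson N D F)"
    unfolding hutchinson_def
    by (intro monoI divide_right_mono sum_mono monoD[OF mono]) (auto intro: mult_left_mono)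
  moreover have "hutchinson N D F y = 0" if "y \<le> 0" for y
  proof -
    have "real N * y \<le> 0" using that by (simp add: mult_nonneg_nonpos)
    then show ?thesis by (simp add: hutchinson_def F0)
  qed
  moreover have "hutchinson N D F y = 1" if "1 \<le> y" for y
  proof -
    have "F (real N * y - real d) = 1" if "d \<in> D" for d
    proof (rule F1)
      have "real d + 1 \<le> real N" using that D(3) by (auto simp: Suc_le_eq[symmetric])
      moreover have "real N \<le> real N * y"
        using mult_left_mono[OF \<open>1 \<le> y\<close>, of "real N"] by simp
      ultimately show "1 \<le> real N * y - real d" by linarith
    qed
    then show ?thesis using card by (simp add: hutchinson_def)
  qed
  moreover have "continuous_on UNIV (hutchinson N D F)"
    unfolding hutchinson_def using card by (intro continuous_intros continuous_on_compose2[OF cont]) auto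
  ultimately show ?thesis
    unfolding unit_cdf_def by blast
qed

lemma uniform_limit_geometric_increments:
  fixes G :: "nat \<Rightarrow> 'a \<Rightarrow> real"
  assumes "\<And>n x. x \<in> S \<Longrightarrow> \<bar>G (Suc n) x - G n x\<bar> \<le> C * q ^ n" and "\<bar>q\<bar> < 1"
  obtains F where "uniform_limit S G F sequentially"
proof
  have "uniform_limit S (\<lambda>n x. \<Sum>i<n. G (Suc i) x - G i x) (\<lambda>x. \<Sum>i. G (Suc i) x - G i x) sequentially"
    using assms by (intro Weierstrass_m_test[where M = "\<lambda>n. C * q ^ n"] summable_mult summable_geometric) auto
  then have "uniform_limit S (\<lambda>n x. G 0 x + (\<Sum>i<n. G (Suc i) x - G i x))
      (\<lambda>x. G 0 x + (\<Sum>i. G (Suc i) x - G i x)) sequentially"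
    by (intro uniform_limit_add uniform_limit_const)
  moreover have "(\<Sum>i<n. G (Suc i) x - G i x) = G n x - G 0 x" for n x
    by (rule sum_lessThan_telescope)
  ultimately show "uniform_limit S G (\<lambda>x. G 0 x + (\<Sum>i. G (Suc i) x - G i x)) sequentially"
    by simp
qed

lemma unit_cdf_uniform_limit:
  assumes unit: "\<And>n. unit_cdf (G n)" and lim: "uniform_limit UNIV G F sequentially"
  shows "unit_cdf F"
proof -
  have conv: "(\<lambda>n. G n x) \<longlonglongrightarrow> F x" for x
    using tendsto_uniform_limitI[OF lim] by simp
  have "continuous_on UNIV F"
    by (rule uniform_limit_theorem[OF _ lim]) (use unit in \<open>auto simp: unit_cdf_def\<close>)
  moreover have "mono F"
    using unit by (intro monoI LIMSEQ_le[OF conv conv]) (auto simp: unit_cdf_def monoD)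
  moreover have "F y = 0" if "y \<le> 0" for y
    using conv[of y] unit that by (simp add: unit_cdf_def LIMSEQ_const_iff)
  moreover have "F y = 1" if "1 \<le> y" for y
    using conv[of y] unit that by (simp add: unit_cdf_def LIMSEQ_const_iff)
  ultimately show "unit_cdf F"
    by (simp add: unit_cdf_def)
qed

lemma hutchinson_fixed_point_exists:
  assumes D: "finite D" "D \<subseteq> {..<N}" "2 \<le> card D"
  obtains F where "unit_cdf F" "hutchinson N D F = F"
proof -
  define G where "G n = (hutchinson N D ^^ n) (\<lambda>x. max 0 (min 1 x))" for n
  have G_Suc: "G (Suc n) = hutchinson N D (G n)" for n
    by (simp add: G_def)
  have unit: "unit_cdf (G n)" for n
  proof (induction n)
    case 0
    show ?case
      by (auto simp: G_def unit_cdf_def mono_def intro!: continuous_intros)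
  next
    case (Suc n)
    moreover have "D \<noteq> {}"
      using D(3) by auto
    ultimately show ?case
      unfolding G_Suc using D by (intro unit_cdf_hutchinson)
  qed
  have "\<bar>G (Suc n) x - G n x\<bar> \<le> 1 * (1/2) ^ n" for n x
  proof (induction n arbitrary: x)
    case 0
    show ?case using unit_cdf_bounds[OF unit, of "Suc 0" x] unit_cdf_bounds[OF unit, of 0 x] by simp
  next
    case (Suc n)
    have "\<bar>G (Suc (Suc n)) x - G (Suc n) x\<bar>
        = \<bar>hutchinson N D (G (Suc n)) x - hutchinson N D (G n) x\<bar>"
      by (simp only: G_Suc)
    also have "\<dots> \<le> (1/2) ^ n / real (card D)"
      using Suc unit[of n] unit[of "Suc n"]
      by (intro abs_hutchinson_diff_le) (auto simp: unit_cdf_def)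
    also have "\<dots> \<le> (1/2) ^ n / 2"
      using D(3) by (intro divide_left_mono) auto
    finally show ?case by simp
  qed
  then obtain F where lim: "uniform_limit UNIV G F sequentially"
    by (rule uniform_limit_geometric_increments) simp
  have "hutchinson N D F x = F x" for x
  proof -
    have conv: "(\<lambda>n. G n y) \<longlonglongrightarrow> F y" for y
      using tendsto_uniform_limitI[OF lim] by simp
    then have "(\<lambda>n. G (Suc n) x) \<longlonglongrightarrow> hutchinson N D F x"
      unfolding G_Suc hutchinson_def by (intro tendsto_intros) (use D(3) in auto)
    then show ?thesis
      using LIMSEQ_unique LIMSEQ_Suc[OF conv] by blast
  qed
  with unit_cdf_uniform_limit[OF unit lim] show ?thesis
    by (intro that) auto
qed

lemma hutchinson_fixed_iterate_bounds:
  assumes mono: "mono F" and fixed: "hutchinson N D F = F"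
    and D: "finite D" "D \<noteq> {}" "D \<subseteq> {..<N}"
  shows "F x \<le> F (x * real N ^ n)" and "F (1 + (x - 1) * real N ^ n) \<le> F x"
proof -
  let ?N = "real N"
  have card: "0 < real (card D)"
    using D by (simp add: card_gt_0_iff)
  have up: "F x \<le> F (?N * x)" for x
  proof -
    have "F x = (\<Sum>d\<in>D. F (?N * x - real d)) / real (card D)"
      using fixed by (metis hutchinson_def)
    also have "\<dots> \<le> (\<Sum>d\<in>D. F (?N * x)) / real (card D)"
      by (intro divide_right_mono sum_mono monoD[OF mono]) auto
    finally show ?thesis using card by simp
  qed
  have down: "F (?N * (x - 1) + 1) \<le> F x" for x
  proof -
    have "F (?N * (x - 1) + 1) = (\<Sum>d\<in>D. F (?N * (x - 1) + 1)) / real (card D)"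
      using card by simp
    also have "\<dots> \<le> (\<Sum>d\<in>D. F (?N * x - real d)) / real (card D)"
    proof (intro divide_right_mono sum_mono monoD[OF mono])
      fix d assume "d \<in> D"
      then have "real d + 1 \<le> ?N" using D(3) by (auto simp: Suc_le_eq[symmetric])
      then show "?N * (x - 1) + 1 \<le> ?N * x - real d" by (simp add: algebra_simps)
    qed simp
    also have "\<dots> = F x"
      using fixed by (metis hutchinson_def)
    finally show ?thesis .
  qed
  show "F x \<le> F (x * ?N ^ n)"
  proof (induction n)
    case (Suc n)
    show ?case
      using up[of "x * ?N ^ n"] Suc by (simp add: algebra_simps)
  qed simp
  show "F (1 + (x - 1) * ?N ^ n) \<le> F x"
  proof (induction n)
    case (Suc n)
    show ?case
      using down[of "1 + (x - 1) * ?N ^ n"] Suc by (simp add: algebra_simps)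
  qed simp
qed

lemma (in real_distribution)
  assumes fixed: "hutchinson N D (cdf M) = cdf M"
    and D: "finite D" "D \<noteq> {}" "D \<subseteq> {..<N}" and N: "2 \<le> N"
  shows cdf_hutchinson_fixed_neg: "y < 0 \<Longrightarrow> cdf M y = 0"
    and cdf_hutchinson_fixed_ge1: "1 \<le> y \<Longrightarrow> cdf M y = 1"
proof -
  let ?F = "cdf M" and ?N = "real N"
  have "mono ?F"
    by (intro monoI cdf_nondecreasing)
  note bounds = hutchinson_fixed_iterate_bounds[OF this fixed D]
  have pow: "filterlim (\<lambda>n. ?N ^ n) at_top sequentially"
    using N by (simp add: Archimedean_eventually_pow filterlim_at_top_dense)
  have gt1: "?F y = 1" if "1 < y" for y
  proof (rule antisym)
    have "(\<lambda>n. ?F (1 + (y - 1) * ?N ^ n)) \<longlonglongrightarrow> 1"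
      using that by (intro filterlim_compose[OF cdf_lim_at_top_prob] filterlim_tendsto_add_at_top[OF tendsto_const]
          filterlim_tendsto_pos_mult_at_top[OF tendsto_const _ pow]) auto
    then show "1 \<le> ?F y"
      by (rule LIMSEQ_le_const2) (use bounds(2) in auto)
  qed (rule cdf_bounded_prob)
  show "cdf M y = 0" if "y < 0"
  proof (rule antisym)
    have "(\<lambda>n. ?F (y * ?N ^ n)) \<longlonglongrightarrow> 0"
      using that by (intro filterlim_compose[OF cdf_lim_at_bot]
          filterlim_tendsto_neg_mult_at_bot[OF tendsto_const _ pow])
    then show "?F y \<le> 0"
      by (rule LIMSEQ_le_const) (use bounds(1) in auto)
  qed (rule cdf_nonneg)
  show "cdf M y = 1" if "1 \<le> y"
  proof (cases "y = 1")
    case True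
    have "\<forall>\<^sub>F z in at_right 1. ?F z = 1"
      using eventually_at_right_less[of "1::real"] by eventually_elim (rule gt1)
    then have "(?F \<longlongrightarrow> 1) (at_right 1)"
      by (rule tendsto_eventually)
    moreover have "(?F \<longlongrightarrow> ?F 1) (at_right 1)"
      using cdf_is_right_cont by (simp add: continuous_within)
    ultimately show ?thesis
      using True tendsto_unique by (metis trivial_limit_at_right_real)
  qed (use gt1 that in simp)
qed

lemma (in real_distribution) measure_Icc_0_eq_cdf:
  assumes neg: "\<And>y. y < 0 \<Longrightarrow> cdf M y = 0" and x: "0 \<le> x"
  shows "measure M {0..x} = cdf M x"
proof -
  have "\<forall>\<^sub>F y in at_left 0. y < (0::real)"
    by (simp add: eventually_at_filter)
  then have "\<forall>\<^sub>F y in at_left 0. cdf M y = 0"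
    by eventually_elim (rule neg)
  then have "(cdf M \<longlongrightarrow> 0) (at_left 0)"
    by (rule tendsto_eventually)
  then have "measure M {..<0} = 0"
    using cdf_at_left tendsto_unique by (metis trivial_limit_at_left_real)
  moreover have "measure M {..x} = measure M {..<0} + measure M {0..x}"
    using x by (subst finite_measure_Union[symmetric]) (auto intro: arg_cong[where f = "measure M"])
  ultimately show ?thesis
    by (simp add: cdf_def)
qed

section \<open>Self-similar measures\<close>

lemma bnorm_eq_card_digit_set:
  assumes "set B \<subseteq> {0, 1}"
  shows "bnorm B = card (digit_set B)"
proof -
  have "bnorm B = (\<Sum>i<length B. B ! i)"
    unfolding bnorm_def by (simp add: sum_list_sum_nth atLeast0LessThan)
  also have "\<dots> = (\<Sum>i\<in>digit_set B. B ! i)"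
    using assms nth_mem by (intro sum.mono_neutral_right) (fastforce simp: digit_set_def)+
  also have "\<dots> = card (digit_set B)"
    by (simp add: digit_set_def)
  finally show ?thesis .
qed

lemma binary_digit_vectorD:
  assumes "binary_digit_vector B"
  shows "finite (digit_set B)" "digit_set B \<subseteq> {..<length B}" "2 \<le> card (digit_set B)"
    and "card (digit_set B) = bnorm B" "3 \<le> length B"
  using assms bnorm_eq_card_digit_set
  by (auto simp: binary_digit_vector_def digit_set_def)

definition hutchinson_measure :: "nat list \<Rightarrow> real measure \<Rightarrow> real measure" where
  "hutchinson_measure B \<mu> =
     measure_pmf (pmf_of_set (digit_set B)) \<bind> (\<lambda>d. distr \<mu> borel (phi B d))"

lemma phi_measurable [measurable]: "phi B d \<in> borel_measurable borel"
  unfolding phi_def by measurable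

lemma
  assumes \<mu>: "real_distribution \<mu>" and D: "finite (digit_set B)" "digit_set B \<noteq> {}"
  shows real_distribution_hutchinson_measure: "real_distribution (hutchinson_measure B \<mu>)"
    and emeasure_hutchinson_measure: "A \<in> sets borel \<Longrightarrow> emeasure (hutchinson_measure B \<mu>) A =
      (\<Sum>d\<in>digit_set B. emeasure \<mu> (phi B d -` A)) / ennreal (real (card (digit_set B)))"
proof -
  interpret real_distribution \<mu> by (rule \<mu>)
  let ?P = "measure_pmf (pmf_of_set (digit_set B))" and ?K = "\<lambda>d. distr \<mu> borel (phi B d)"
  have "phi B d \<in> borel_measurable \<mu>" for d
    using phi_measurable by simp
  then have K: "?K \<in> measurable ?P (subprob_algebra borel)"
    by (auto simp: space_subprob_algebra intro!: prob_space_imp_subprob_space prob_space_distr)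
  have "sets (hutchinson_measure B \<mu>) = sets borel"
    unfolding hutchinson_measure_def by (rule sets_bind[where N = borel]) auto
  moreover have "prob_space (hutchinson_measure B \<mu>)"
    unfolding hutchinson_measure_def by (rule measure_pmf.prob_space_bind[OF _ K]) (simp add: prob_space_distr)
  ultimately show "real_distribution (hutchinson_measure B \<mu>)"
    by (simp add: real_distribution_def real_distribution_axioms_def)
  show "emeasure (hutchinson_measure B \<mu>) A =
      (\<Sum>d\<in>digit_set B. emeasure \<mu> (phi B d -` A)) / ennreal (real (card (digit_set B)))"
    if A: "A \<in> sets borel"
  proof -
    have "emeasure (hutchinson_measure B \<mu>) A = (\<integral>\<^sup>+d. emeasure (?K d) A \<partial>?P)"
      unfolding hutchinson_measure_def by (rule emeasure_bind[OF _ K A]) simp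
    also have "\<dots> = (\<Sum>d\<in>digit_set B. emeasure (?K d) A) / of_nat (card (digit_set B))"
      by (rule nn_integral_pmf_of_set[OF D(2,1)])
    finally show ?thesis
      using A by (simp add: emeasure_distr ennreal_of_nat_eq_real_of_nat)
  qed
qed

lemma phi_vimage_atMost:
  "0 < length B \<Longrightarrow> phi B d -` {..x} = {..real (length B) * x - real d}"
  by (auto simp: phi_def divide_le_eq algebra_simps)

lemma cdf_hutchinson_measure:
  assumes \<mu>: "real_distribution \<mu>" and D: "finite (digit_set B)" "digit_set B \<noteq> {}"
    and N: "0 < length B"
  shows "cdf (hutchinson_measure B \<mu>) = hutchinson (length B) (digit_set B) (cdf \<mu>)"
proof
  fix x
  interpret \<mu>: real_distribution \<mu> by (rule \<mu>)
  interpret \<nu>: real_distribution "hutchinson_measure B \<mu>"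
    by (rule real_distribution_hutchinson_measure[OF \<mu> D])
  have "ennreal (cdf (hutchinson_measure B \<mu>) x)
      = (\<Sum>d\<in>digit_set B. ennreal (cdf \<mu> (real (length B) * x - real d))) / ennreal (real (card (digit_set B)))"
    using emeasure_hutchinson_measure[OF \<mu> D, of "{..x}"]
    by (simp add: phi_vimage_atMost[OF N] cdf_def \<nu>.emeasure_eq_measure \<mu>.emeasure_eq_measure)
  also have "\<dots> = ennreal (hutchinson (length B) (digit_set B) (cdf \<mu>) x)"
    unfolding hutchinson_def using D
    by (simp add: sum_ennreal \<mu>.cdf_nonneg divide_ennreal sum_nonneg card_gt_0_iff)
  finally show "cdf (hutchinson_measure B \<mu>) x = hutchinson (length B) (digit_set B) (cdf \<mu>) x"
    by (subst (asm) ennreal_inj)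
      (auto simp: hutchinson_def \<nu>.cdf_nonneg \<mu>.cdf_nonneg sum_nonneg)
qed

lemma self_similar_iff_hutchinson_measure:
  assumes B: "binary_digit_vector B"
  shows "self_similar B \<mu> \<longleftrightarrow> real_distribution \<mu> \<and> hutchinson_measure B \<mu> = \<mu>"
proof -
  note D = binary_digit_vectorD[OF B]
  have ne: "digit_set B \<noteq> {}"
    using D(3) by auto
  have eq: "emeasure (hutchinson_measure B \<mu>) A =
      (\<Sum>d\<in>digit_set B. emeasure \<mu> (phi B d -` A)) / ennreal (real (bnorm B))"
    if "real_distribution \<mu>" "A \<in> sets borel" for A
    using emeasure_hutchinson_measure[OF that(1) D(1) ne] that(2) D(4) by simp
  have sets: "sets (hutchinson_measure B \<mu>) = sets borel" if "real_distribution \<mu>"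
    using real_distribution.events_eq_borel[OF real_distribution_hutchinson_measure[OF that D(1) ne]] .
  show ?thesis
  proof
    assume ss: "self_similar B \<mu>"
    then have \<mu>: "real_distribution \<mu>"
      by (simp add: self_similar_def real_distribution_def real_distribution_axioms_def)
    then show "real_distribution \<mu> \<and> hutchinson_measure B \<mu> = \<mu>"
      using ss eq[OF \<mu>] sets[OF \<mu>] by (auto intro: measure_eqI simp: self_similar_def)
  next
    assume "real_distribution \<mu> \<and> hutchinson_measure B \<mu> = \<mu>"
    then show "self_similar B \<mu>"
      using eq sets unfolding self_similar_def by (metis prob_space_def real_distribution_def)
  qed
qed

lemma
  assumes B: "binary_digit_vector B" and ss: "self_similar B \<mu>"
  shows real_distribution_self_similar: "real_distribution \<mu>"
    and cdf_self_similar_fixed: "hutchinson (length B) (digit_set B) (cdf \<mu>) = cdf \<mu>"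
    and cdf_self_similar_neg: "y < 0 \<Longrightarrow> cdf \<mu> y = 0"
    and cdf_self_similar_ge1: "1 \<le> y \<Longrightarrow> cdf \<mu> y = 1"
proof -
  note D = binary_digit_vectorD[OF B]
  have ne: "digit_set B \<noteq> {}"
    using D(3) by auto
  show \<mu>: "real_distribution \<mu>"
    using ss by (simp add: self_similar_iff_hutchinson_measure[OF B])
  have "0 < length B"
    using D(5) by linarith
  moreover have "hutchinson_measure B \<mu> = \<mu>"
    using ss by (simp add: self_similar_iff_hutchinson_measure[OF B])
  ultimately show fixed: "hutchinson (length B) (digit_set B) (cdf \<mu>) = cdf \<mu>"
    using cdf_hutchinson_measure[OF \<mu> D(1) ne] by metis
  show "y < 0 \<Longrightarrow> cdf \<mu> y = 0" "1 \<le> y \<Longrightarrow> cdf \<mu> y = 1"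
    using real_distribution.cdf_hutchinson_fixed_neg[OF \<mu> fixed D(1) ne D(2)]
      real_distribution.cdf_hutchinson_fixed_ge1[OF \<mu> fixed D(1) ne D(2)] D(5) by auto
qed

lemma self_similar_unique:
  assumes B: "binary_digit_vector B" and ss: "self_similar B \<mu>1" "self_similar B \<mu>2"
  shows "\<mu>1 = \<mu>2"
proof -
  note D = binary_digit_vectorD[OF B]
  interpret \<mu>1: real_distribution \<mu>1 by (rule real_distribution_self_similar[OF B ss(1)])
  interpret \<mu>2: real_distribution \<mu>2 by (rule real_distribution_self_similar[OF B ss(2)])
  have "\<bar>cdf \<mu>1 x - cdf \<mu>2 x\<bar> \<le> (1/2) ^ n" for n x
  proof (induction n arbitrary: x)
    case 0
    show ?case
      using \<mu>1.cdf_nonneg[of x] \<mu>2.cdf_nonneg[of x] \<mu>1.cdf_bounded_prob[of x] \<mu>2.cdf_bounded_prob[of x]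
      by simp
  next
    case (Suc n)
    have "\<bar>cdf \<mu>1 x - cdf \<mu>2 x\<bar> = \<bar>hutchinson (length B) (digit_set B) (cdf \<mu>1) x
        - hutchinson (length B) (digit_set B) (cdf \<mu>2) x\<bar>"
      by (simp only: cdf_self_similar_fixed[OF B ss(1)] cdf_self_similar_fixed[OF B ss(2)])
    also have "\<dots> \<le> (1/2) ^ n / real (card (digit_set B))"
      using Suc cdf_self_similar_neg[OF B ss(1)] cdf_self_similar_neg[OF B ss(2)]
        cdf_self_similar_ge1[OF B ss(1)] cdf_self_similar_ge1[OF B ss(2)]
      by (intro abs_hutchinson_diff_le) auto
    also have "\<dots> \<le> (1/2) ^ n / 2"
      using D(3) by (intro divide_left_mono) auto
    finally show ?case by simp
  qed
  moreover have "(\<lambda>n. (1/2::real) ^ n) \<longlonglongrightarrow> 0"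
    by (rule LIMSEQ_power_zero) simp
  ultimately have "\<bar>cdf \<mu>1 x - cdf \<mu>2 x\<bar> \<le> 0" for x
    by (intro LIMSEQ_le_const) auto
  then show ?thesis
    by (intro cdf_unique \<mu>1.real_distribution_axioms \<mu>2.real_distribution_axioms) auto
qed

lemma self_similar_exists:
  assumes B: "binary_digit_vector B"
  shows "\<exists>\<mu>. self_similar B \<mu>"
proof -
  note D = binary_digit_vectorD[OF B]
  have ne: "digit_set B \<noteq> {}"
    using D(3) by auto
  obtain F where F: "unit_cdf F" and fixed: "hutchinson (length B) (digit_set B) F = F"
    using hutchinson_fixed_point_exists[OF D(1-3)] .
  have mono: "\<And>x y. x \<le> y \<Longrightarrow> F x \<le> F y" and right_cont: "\<And>a. continuous (at_right a) F"
    using F by (auto simp: unit_cdf_def monoD continuous_on_eq_continuous_within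
        intro: continuous_at_imp_continuous_at_within)
  have "(F \<longlongrightarrow> 0) at_bot"
    using F by (auto simp: unit_cdf_def eventually_at_bot_linorder intro!: tendsto_eventually exI[of _ 0])
  moreover have "(F \<longlongrightarrow> 1) at_top"
    using F by (auto simp: unit_cdf_def eventually_at_top_linorder intro!: tendsto_eventually exI[of _ 1])
  ultimately
  have \<mu>: "real_distribution (interval_measure F)" and cdf_\<mu>: "cdf (interval_measure F) = F"
    using real_distribution_interval_measure cdf_interval_measure mono right_cont by auto
  have "0 < length B"
    using D(5) by linarith
  then have "hutchinson_measure B (interval_measure F) = interval_measure F"
    using cdf_hutchinson_measure[OF \<mu> D(1) ne] cdf_\<mu> fixed
    by (intro cdf_unique real_distribution_hutchinson_measure[OF \<mu> D(1) ne] \<mu>) auto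
  then show ?thesis
    using \<mu> self_similar_iff_hutchinson_measure[OF B] by blast
qed

lemma self_similar_mu_B: "binary_digit_vector B \<Longrightarrow> self_similar B (mu_B B)"
  unfolding mu_B_def using self_similar_exists self_similar_unique by (metis theI)

lemma cdf_B_at_gap:
  assumes B: "binary_digit_vector B" and x: "0 \<le> x"
    and gap: "nat \<lfloor>real (length B) * x\<rfloor> \<notin> digit_set B"
  shows "cdf_B B x = real (card {d\<in>digit_set B. d < nat \<lfloor>real (length B) * x\<rfloor>}) / real (bnorm B)"
proof -
  note ss = self_similar_mu_B[OF B]
  interpret real_distribution "mu_B B" by (rule real_distribution_self_similar[OF B ss])
  have "cdf_B B x = hutchinson (length B) (digit_set B) (cdf (mu_B B)) x"
    using measure_Icc_0_eq_cdf[OF cdf_self_similar_neg[OF B ss] x]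
    by (simp add: cdf_B_def cdf_self_similar_fixed[OF B ss])
  also have "\<dots> = real (card {d\<in>digit_set B. d < nat \<lfloor>real (length B) * x\<rfloor>}) / real (bnorm B)"
    using x binary_digit_vectorD(4)[OF B]
    by (subst hutchinson_at_gap[OF cdf_self_similar_neg[OF B ss] cdf_self_similar_ge1[OF B ss] _ _ gap])
      simp_all
  finally show ?thesis .
qed

section \<open>Choosing the digits\<close>

definition digit_vector :: "nat \<Rightarrow> nat set \<Rightarrow> nat list" where
  "digit_vector N D = map (\<lambda>i. if i \<in> D then 1 else 0) [0..<N]"

lemma length_digit_vector [simp]: "length (digit_vector N D) = N"
  by (simp add: digit_vector_def)

lemma digit_set_digit_vector: "D \<subseteq> {..<N} \<Longrightarrow> digit_set (digit_vector N D) = D"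
  by (auto simp: digit_set_def digit_vector_def split: if_splits)

lemma binary_digit_vector_digit_vector:
  assumes "D \<subseteq> {..<N}" "3 \<le> N" "2 \<le> card D" "card D \<le> N - 1"
  shows "binary_digit_vector (digit_vector N D)"
proof -
  have "set (digit_vector N D) \<subseteq> {0, 1}"
    by (auto simp: digit_vector_def)
  then show ?thesis
    using assms bnorm_eq_card_digit_set digit_set_digit_vector
    by (simp add: binary_digit_vector_def)
qed

lemma digit_positions:
  fixes a c :: "'i \<Rightarrow> nat"
  assumes I: "finite I" and MN: "M \<le> N"
    and a_range: "\<And>n. n \<in> I \<Longrightarrow> M \<le> a n \<and> a n + M < N"
    and c_mono: "\<And>m n. m \<in> I \<Longrightarrow> n \<in> I \<Longrightarrow> c n < c m \<Longrightarrow> a n < a m"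
    and a_gap: "\<And>m n. m \<in> I \<Longrightarrow> n \<in> I \<Longrightarrow> a n < a m \<Longrightarrow> a n + M < a m"
  obtains p where "strict_mono p" "\<And>j. j < M \<Longrightarrow> p j < N"
    and "\<And>n j. n \<in> I \<Longrightarrow> j < M \<Longrightarrow> p j < a n \<longleftrightarrow> j < c n"
    and "\<And>n j. n \<in> I \<Longrightarrow> j < M \<Longrightarrow> p j \<noteq> a n"
proof -
  \<comment> \<open>Position j lies M - j places below t j, the leftmost point a n with j < c n (or N if
    there is none); since the gaps between points exceed M, no point lies between it and t j.\<close>
  define t where "t j = Min (insert N (a ` {n\<in>I. j < c n}))" for j
  have t_cases: "t j = N \<or> (\<exists>m\<in>I. j < c m \<and> t j = a m)" for j
    using Min_in[of "insert N (a ` {n\<in>I. j < c n})"] I by (auto simp: t_def)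
  have t_le_N: "t j \<le> N" and t_le: "\<And>n. n \<in> I \<Longrightarrow> j < c n \<Longrightarrow> t j \<le> a n" for j
    using I by (auto simp: t_def)
  have t_mono: "t j \<le> t j'" if "j \<le> j'" for j j'
    using I that unfolding t_def by (intro Min_antimono) auto
  have M_le_t: "M \<le> t j" for j
    using t_cases[of j] MN a_range by auto
  define p where "p j = t j + j - M" for j
  show ?thesis
  proof
    show "strict_mono p"
    proof (rule strict_monoI)
      fix j j' :: nat assume "j < j'"
      then show "p j < p j'"
        using t_mono[of j j'] M_le_t[of j] by (simp add: p_def)
    qed
    show "p j < N" if "j < M" for j
      using that t_le_N[of j] M_le_t[of j] by (simp add: p_def)
    fix n j assume n: "n \<in> I" and "j < M"
    have "p j < a n" if "j < c n"
      using t_le[OF n that] \<open>j < M\<close> M_le_t[of j] by (simp add: p_def)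
    moreover have "a n < p j" if "c n \<le> j"
      using t_cases[of j]
    proof
      assume "t j = N"
      then show ?thesis using a_range[OF n] by (simp add: p_def less_diff_conv)
    next
      assume "\<exists>m\<in>I. j < c m \<and> t j = a m"
      then obtain m where "m \<in> I" "j < c m" "t j = a m" by blast
      then show ?thesis
        using a_gap[OF _ n c_mono] n that by (fastforce simp: p_def)
    qed
    ultimately show "p j < a n \<longleftrightarrow> j < c n" "p j \<noteq> a n"
      by (meson not_less order.asym, metis not_less less_irrefl)
  qed
qed

lemma digit_set_with_counts:
  fixes a c :: "'i \<Rightarrow> nat"
  assumes I: "finite I" and MN: "M \<le> N"
    and c_le: "\<And>n. n \<in> I \<Longrightarrow> c n \<le> M"
    and a_range: "\<And>n. n \<in> I \<Longrightarrow> M \<le> a n \<and> a n + M < N"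
    and c_mono: "\<And>m n. m \<in> I \<Longrightarrow> n \<in> I \<Longrightarrow> c n < c m \<Longrightarrow> a n < a m"
    and a_gap: "\<And>m n. m \<in> I \<Longrightarrow> n \<in> I \<Longrightarrow> a n < a m \<Longrightarrow> a n + M < a m"
  obtains D where "D \<subseteq> {..<N}" "card D = M"
    and "\<And>n. n \<in> I \<Longrightarrow> a n \<notin> D \<and> card {d\<in>D. d < a n} = c n"
proof -
  obtain p where p_mono: "strict_mono p" and p_less: "\<And>j. j < M \<Longrightarrow> p j < N"
    and p_below: "\<And>n j. n \<in> I \<Longrightarrow> j < M \<Longrightarrow> p j < a n \<longleftrightarrow> j < c n"
    and p_ne: "\<And>n j. n \<in> I \<Longrightarrow> j < M \<Longrightarrow> p j \<noteq> a n"
    using digit_positions[where a = a and c = c and M = M, OF I MN a_range c_mono a_gap] by blast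
  have inj: "inj_on p A" for A
    using p_mono by (rule strict_mono_imp_inj_on)
  show ?thesis
  proof
    show "p ` {..<M} \<subseteq> {..<N}" "card (p ` {..<M}) = M"
      using p_less inj by (auto simp: card_image)
    fix n assume "n \<in> I"
    have "{d \<in> p ` {..<M}. d < a n} = p ` {j \<in> {..<M}. p j < a n}"
      by auto
    also have "{j \<in> {..<M}. p j < a n} = {..<c n}"
      using p_below[OF \<open>n \<in> I\<close>] c_le[OF \<open>n \<in> I\<close>] by auto
    finally have "card {d \<in> p ` {..<M}. d < a n} = c n"
      using inj by (simp add: card_image)
    moreover have "a n \<notin> p ` {..<M}"
      using p_ne[OF \<open>n \<in> I\<close>] by (metis imageE lessThan_iff)
    ultimately show "a n \<notin> p ` {..<M} \<and> card {d \<in> p ` {..<M}. d < a n} = c n"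
      by simp
  qed
qed

lemma scale_separating_points:
  fixes x :: "'i \<Rightarrow> real"
  assumes I: "finite I" and x: "\<And>n. n \<in> I \<Longrightarrow> 0 < x n \<and> x n < 1"
  obtains N where "M + 3 \<le> N"
    and "\<And>n. n \<in> I \<Longrightarrow> M \<le> nat \<lfloor>real N * x n\<rfloor> \<and> nat \<lfloor>real N * x n\<rfloor> + M < N"
    and "\<And>m n. m \<in> I \<Longrightarrow> n \<in> I \<Longrightarrow> x n < x m \<Longrightarrow>
      nat \<lfloor>real N * x n\<rfloor> + M < nat \<lfloor>real N * x m\<rfloor>"
proof -
  have large: "\<forall>\<^sub>F N in sequentially. real M + 1 \<le> real N * s" if "0 < s" for s
  proof (rule eventually_sequentiallyI)
    fix N assume "nat \<lceil>(real M + 1) / s\<rceil> \<le> N"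
    then have "(real M + 1) / s \<le> real N" by linarith
    then show "real M + 1 \<le> real N * s" using that by (simp add: divide_le_eq)
  qed
  have gap: "\<forall>\<^sub>F N in sequentially. x n < x m \<longrightarrow> real M + 1 \<le> real N * (x m - x n)" for m n
    by (cases "x n < x m") (auto intro: large)
  have "\<forall>\<^sub>F N in sequentially. M + 3 \<le> N \<and> (\<forall>n\<in>I. real M + 1 \<le> real N * x n \<and>
      real M + 1 \<le> real N * (1 - x n) \<and> (\<forall>m\<in>I. x n < x m \<longrightarrow> real M + 1 \<le> real N * (x m - x n)))"
    using x by (intro eventually_conj eventually_ge_at_top eventually_ball_finite I ballI large gap) auto
  then obtain N where "M + 3 \<le> N" and N: "\<And>n. n \<in> I \<Longrightarrow> real M + 1 \<le> real N * x n \<and>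
      real M + 1 \<le> real N * (1 - x n) \<and> (\<forall>m\<in>I. x n < x m \<longrightarrow> real M + 1 \<le> real N * (x m - x n))"
    using eventually_happens'[OF sequentially_bot] by blast
  define a where "a n = nat \<lfloor>real N * x n\<rfloor>" for n
  have a: "real (a n) \<le> real N * x n \<and> real N * x n < real (a n) + 1" if "n \<in> I" for n
  proof -
    have "0 \<le> real N * x n" using x[OF that] by simp
    then show ?thesis unfolding a_def by linarith
  qed
  have "M \<le> a n \<and> a n + M < N" if "n \<in> I" for n
    using N[OF that] a[OF that] by (simp add: algebra_simps)
  moreover have "a n + M < a m" if "m \<in> I" "n \<in> I" "x n < x m" for m n
  proof -
    have "real M + 1 \<le> real N * x m - real N * x n"
      using N[OF that(2)] that(1,3) by (simp add: right_diff_distrib)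
    moreover have "real N * x m < real (a m) + 1" "real (a n) \<le> real N * x n"
      using a[OF that(1)] a[OF that(2)] by simp_all
    ultimately have "real (a n) + real M < real (a m)"
      by linarith
    then show ?thesis
      by (simp only: of_nat_add[symmetric] of_nat_less_iff)
  qed
  ultimately show ?thesis
    using that \<open>M + 3 \<le> N\<close> unfolding a_def by blast
qed

lemma digit_set_for_points:
  fixes x :: "'i \<Rightarrow> real" and c :: "'i \<Rightarrow> nat"
  assumes I: "finite I" and x: "\<And>n. n \<in> I \<Longrightarrow> 0 < x n \<and> x n < 1"
    and c_le: "\<And>n. n \<in> I \<Longrightarrow> c n \<le> M"
    and c_mono: "\<And>m n. m \<in> I \<Longrightarrow> n \<in> I \<Longrightarrow> x m \<le> x n \<Longrightarrow> c m \<le> c n"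
  obtains N D where "M + 3 \<le> N" "D \<subseteq> {..<N}" "card D = M"
    and "\<And>n. n \<in> I \<Longrightarrow> nat \<lfloor>real N * x n\<rfloor> \<notin> D \<and> card {d\<in>D. d < nat \<lfloor>real N * x n\<rfloor>} = c n"
proof -
  obtain N where "M + 3 \<le> N" and a_range: "\<And>n. n \<in> I \<Longrightarrow> M \<le> nat \<lfloor>real N * x n\<rfloor> \<and> nat \<lfloor>real N * x n\<rfloor> + M < N"
    and a_gap: "\<And>m n. m \<in> I \<Longrightarrow> n \<in> I \<Longrightarrow> x n < x m \<Longrightarrow>
      nat \<lfloor>real N * x n\<rfloor> + M < nat \<lfloor>real N * x m\<rfloor>"
    using scale_separating_points[where x = x and M = M, OF I x] by blast
  let ?a = "\<lambda>n. nat \<lfloor>real N * x n\<rfloor>"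
  have a_mono: "?a m \<le> ?a n" if "x m \<le> x n" for m n
    using that by (intro nat_mono floor_mono mult_left_mono) auto
  have a_gap': "?a n + M < ?a m" if "m \<in> I" "n \<in> I" "?a n < ?a m" for m n
    using a_gap[OF that(1,2)] a_mono[of m n] that(3) by (metis not_less leD)
  have c_mono': "?a n < ?a m" if "m \<in> I" "n \<in> I" "c n < c m" for m n
    using a_gap[OF that(1,2)] c_mono[OF that(1,2)] that(3) by (metis add_lessD1 not_less leD)
  obtain D where "D \<subseteq> {..<N}" "card D = M"
    "\<And>n. n \<in> I \<Longrightarrow> ?a n \<notin> D \<and> card {d\<in>D. d < ?a n} = c n"
    using digit_set_with_counts[where a = ?a and c = c and M = M and N = N, OF I _ c_le a_range c_mono' a_gap']
      \<open>M + 3 \<le> N\<close> by auto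
  with \<open>M + 3 \<le> N\<close> show ?thesis
    by (rule that)
qed

lemma common_denominator:
  assumes "finite I" "\<And>n. n \<in> I \<Longrightarrow> y n \<in> \<rat>"
  shows "\<exists>M::nat. 2 \<le> M \<and> (\<forall>n\<in>I. real M * y n \<in> \<int>)"
  using assms
proof (induction I rule: finite_induct)
  case (insert i I)
  then obtain M :: nat where M: "2 \<le> M" "\<forall>n\<in>I. real M * y n \<in> \<int>"
    by auto
  obtain p q where q: "0 < q" "y i = of_int p / of_int q"
    using insert.prems Rats_cases' by (metis insertI1)
  define M' where "M' = M * nat q"
  have "real M' * y i = of_int (int M * p)"
    using q by (simp add: M'_def)
  then have "real M' * y i \<in> \<int>"
    by (metis Ints_of_int)
  moreover have "real M' * y n \<in> \<int>" if "n \<in> I" for n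
    using M(2) that q(1) by (auto simp: M'_def algebra_simps intro!: Ints_mult)
  moreover have "M \<le> M'"
    using q(1) by (simp add: M'_def le_nat_iff)
  ultimately show ?case
    using M(1) by (intro exI[of _ M']) auto
qed (intro exI[of _ 2], simp)

lemma counts_for_rationals:
  assumes "finite I" and y: "\<And>n. n \<in> I \<Longrightarrow> y n \<in> \<rat> \<and> 0 \<le> y n \<and> y n \<le> 1"
  obtains M :: nat and c :: "'i \<Rightarrow> nat"
  where "2 \<le> M" "\<And>n. n \<in> I \<Longrightarrow> c n \<le> M \<and> real (c n) = real M * y n"
proof -
  obtain M :: nat where "2 \<le> M" and M: "\<And>n. n \<in> I \<Longrightarrow> real M * y n \<in> \<int>"
    using common_denominator[OF assms(1)] y by blast
  define c where "c n = nat \<lfloor>real M * y n\<rfloor>" for n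
  have "c n \<le> M \<and> real (c n) = real M * y n" if n: "n \<in> I" for n
  proof -
    obtain z where z: "real M * y n = of_int z"
      using M[OF n] by (rule Ints_cases)
    moreover have "0 \<le> real M * y n" "real M * y n \<le> real M"
      using y[OF n] by (simp_all add: mult_left_le)
    ultimately show ?thesis
      by (simp add: c_def le_nat_iff)
  qed
  with \<open>2 \<le> M\<close> show ?thesis
    by (rule that)
qed

theorem proposition2p4:
  fixes k :: nat and x y :: "nat \<Rightarrow> real"
  assumes rat: "\<And>n. n \<in> {1..k} \<Longrightarrow> x n \<in> \<rat> \<and> 0 < x n \<and> x n < 1 \<and> y n \<in> \<rat> \<and> 0 < y n \<and> y n < 1"
    and distinct: "\<And>m n. m \<in> {1..k} \<Longrightarrow> n \<in> {1..k} \<Longrightarrow> m \<noteq> n \<Longrightarrow> x m \<noteq> x n"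
    and mono: "\<And>m n. m \<in> {1..k} \<Longrightarrow> n \<in> {1..k} \<Longrightarrow> x m \<ge> x n \<Longrightarrow> y m \<ge> y n"
  shows "\<exists>B. binary_digit_vector B \<and> (\<forall>n \<in> {1..k}. cdf_B B (x n) = y n)"
proof -
  have y: "y n \<in> \<rat> \<and> 0 \<le> y n \<and> y n \<le> 1" and x: "0 < x n \<and> x n < 1" if "n \<in> {1..k}" for n
    using rat[OF that] by simp_all
  obtain M c where "2 \<le> M" and c: "\<And>n. n \<in> {1..k} \<Longrightarrow> c n \<le> M \<and> real (c n) = real M * y n"
    using counts_for_rationals[of "{1..k}" y, OF finite_atLeastAtMost y] by blast
  have "c m \<le> c n" if "m \<in> {1..k}" "n \<in> {1..k}" "x m \<le> x n" for m n
  proof -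
    have "real (c m) \<le> real (c n)"
      using mono[OF that(2,1,3)] c[OF that(1)] c[OF that(2)] by (simp add: mult_left_mono)
    then show ?thesis
      by simp
  qed
  then obtain N D where "M + 3 \<le> N" "D \<subseteq> {..<N}" "card D = M"
    and D: "\<And>n. n \<in> {1..k} \<Longrightarrow> nat \<lfloor>real N * x n\<rfloor> \<notin> D \<and> card {d\<in>D. d < nat \<lfloor>real N * x n\<rfloor>} = c n"
    using digit_set_for_points[of "{1..k}" x c M, OF finite_atLeastAtMost x] c by blast
  with \<open>2 \<le> M\<close> have B: "binary_digit_vector (digit_vector N D)" "digit_set (digit_vector N D) = D"
    by (simp_all add: binary_digit_vector_digit_vector digit_set_digit_vector)
  then have "bnorm (digit_vector N D) = M"
    using binary_digit_vectorD(4) \<open>card D = M\<close> by metis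
  then have "cdf_B (digit_vector N D) (x n) = y n" if "n \<in> {1..k}" for n
    using cdf_B_at_gap[OF B(1), of "x n"] D[OF that] c[OF that] x[OF that] \<open>2 \<le> M\<close>
    by (simp add: B(2))
  with B(1) show ?thesis
    by blast
qed

end
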